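(* Let $X$ satisfy assumptions (A) described in the context, with Lévy density $\nu$. If a measurable function $f:\mathbb{R}^d\to[0,\infty)$ satisfies $\int_{\mathbb{R}^d}f(y)(\nu(y)\wedge1)\,dy<\infty$, then for every $x\in\mathbb{R}^d$ we have $\int_{\mathbb{R}^d}f(y)(\nu(x-y)\wedge1)\,dy<\infty$.
   Context: Assumptions (A): (H0) $X$ is a pure-jump isotropic Lévy process in $\mathbb{R}^d$ whose Lévy measure is infinite with density $\nu(x)=\nu(|x|)$. (H1) $\nu(r)$ is nonincreasing, absolutely continuous, $-\nu'(r)/r$ nonincreasing (with $\nu(r)=-\int_r^\infty\nu'(\rho)d\rho$), and for some $a_1$: $\nu(r)\le a_1\nu(r+1)$ for $r\ge1$, $\nu(r)\le a_1\nu(2r)$ for $0<r\le1$. (H2) There is $a_2$ such that for every $x_0$, $r\in(0,1]$ and every $h\ge0$ on $\mathbb{R}^d$ harmonic in $B(x_0,r)$, $\sup_{B(x_0,r/2)}h\le a_2\inf_{B(x_0,r/2)}h$ (a Borel $f$ is harmonic in open $D$ if $f(x)=E^xf(X_{\tau_B})$, absolutely convergent, for $x\in B$, for all bounded open $B$ with $\overline B\subset D$, $\tau_B=\inf\{t>0:X_t\notin B\}$). *)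

theory Defs
  imports "HOL-Probability.Probability"
begin

text \<open>Characteristic exponent of the pure-jump isotropic Levy process with
  Levy density y \<mapsto> nu |y| (no drift, no Gaussian part).\<close>
definition levy_exponent :: "(real \<Rightarrow> real) \<Rightarrow> 'v::euclidean_space \<Rightarrow> real" where
  "levy_exponent \<nu> \<xi> = (LINT y|lborel. (1 - cos (\<xi> \<bullet> y)) * \<nu> (norm y))"

definition levy_process ::
  "'a measure \<Rightarrow> (real \<Rightarrow> 'a \<Rightarrow> 'v::euclidean_space) \<Rightarrow> ('v \<Rightarrow> real) \<Rightarrow> bool" where
  "levy_process M X \<psi> \<longleftrightarrow>
     prob_space M \<and>
     (\<forall>t\<ge>0. X t \<in> borel_measurable M) \<and>
     (\<forall>\<omega>\<in>space M. X 0 \<omega> = 0) \<and>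
     (\<forall>\<omega>\<in>space M. \<forall>t\<ge>0. continuous (at_right t) (\<lambda>s. X s \<omega>) \<and>
          (t > 0 \<longrightarrow> (\<exists>l. ((\<lambda>s. X s \<omega>) \<longlongrightarrow> l) (at_left t)))) \<and>
     (\<forall>(ts::nat \<Rightarrow> real) n. 0 \<le> ts 0 \<longrightarrow> strict_mono ts \<longrightarrow>
          prob_space.indep_vars M (\<lambda>_. borel)
            (\<lambda>i \<omega>. X (ts (Suc i)) \<omega> - X (ts i) \<omega>) {..<n}) \<and>
     (\<forall>s t \<xi>. 0 \<le> s \<longrightarrow> s \<le> t \<longrightarrow>
          (\<integral>\<omega>. cis (\<xi> \<bullet> (X t \<omega> - X s \<omega>)) \<partial>M) = complex_of_real (exp (- (t - s) * \<psi> \<xi>)))"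

definition exit_time :: "(real \<Rightarrow> 'a \<Rightarrow> 'v::real_normed_vector) \<Rightarrow> 'v \<Rightarrow> 'v set \<Rightarrow> 'a \<Rightarrow> real" where
  "exit_time X x B \<omega> = Inf {t. t > 0 \<and> x + X t \<omega> \<notin> B}"

definition levy_harmonic ::
  "'a measure \<Rightarrow> (real \<Rightarrow> 'a \<Rightarrow> 'v::euclidean_space) \<Rightarrow> ('v \<Rightarrow> real) \<Rightarrow> 'v set \<Rightarrow> bool" where
  "levy_harmonic M X f D \<longleftrightarrow>
     f \<in> borel_measurable borel \<and>
     (\<forall>B. open B \<and> bounded B \<and> closure B \<subseteq> D \<longrightarrow>
        (\<forall>x\<in>B. integrable M (\<lambda>\<omega>. f (x + X (exit_time X x B \<omega>) \<omega>)) \<and>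
                f x = (\<integral>\<omega>. f (x + X (exit_time X x B \<omega>) \<omega>) \<partial>M)))"

end

theory Submission
  imports Defs
begin

text \<open>A zero of the nonincreasing density \<open>\<nu>\<close> would, by the doubling conditions,
  propagate to all of \<open>(0,\<infinity>)\<close>, contradicting the infinite Levy measure; so \<open>\<nu> > 0\<close>.
  Since \<open>|y| \<le> |x - y| + |x|\<close>, we get \<open>min (\<nu> |x - y|) 1 \<le> C min (\<nu> |y|) 1\<close> for
  \<open>y \<noteq> 0\<close>: if \<open>|x - y| \<ge> 1\<close>, apply \<open>\<nu> r \<le> a\<^sub>1 \<nu> (r + 1)\<close> about \<open>|x|\<close> times;
  if \<open>|x - y| < 1\<close>, use \<open>\<nu> |y| \<ge> \<nu> (1 + |x|) > 0\<close>.\<close>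

lemma nonincreasing_zero_propagates:
  fixes \<nu> :: "real \<Rightarrow> real"
  assumes nonneg: "\<And>r. r > 0 \<Longrightarrow> \<nu> r \<ge> 0"
    and mono: "\<And>r s. 0 < r \<Longrightarrow> r \<le> s \<Longrightarrow> \<nu> s \<le> \<nu> r"
    and step: "\<And>t. t > 0 \<Longrightarrow> \<nu> t \<le> A * \<nu> (t + min t 1)"
    and K: "K > 0" "\<nu> K = 0"
  shows "t > 0 \<Longrightarrow> t + real n * min t 1 \<ge> K \<Longrightarrow> \<nu> t = 0"
proof (induction n arbitrary: t)
  case 0
  then show ?case using nonneg mono K by (metis add.right_neutral mult_zero_left of_nat_0 order_antisym)
next
  case (Suc n)
  have "real n * min t 1 \<le> real n * min (t + min t 1) 1"
    using Suc.prems(1) by (intro mult_left_mono) auto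
  then have "\<nu> (t + min t 1) = 0"
    using Suc.prems by (intro Suc.IH) (auto simp: algebra_simps)
  then show ?case using step[OF Suc.prems(1)] nonneg[OF Suc.prems(1)] by simp
qed

lemma levy_density_pos:
  fixes \<nu> :: "real \<Rightarrow> real"
  assumes nonneg: "\<And>r. r > 0 \<Longrightarrow> \<nu> r \<ge> 0"
    and mono: "\<And>r s. 0 < r \<Longrightarrow> r \<le> s \<Longrightarrow> \<nu> s \<le> \<nu> r"
    and step: "\<And>t. t > 0 \<Longrightarrow> \<nu> t \<le> A * \<nu> (t + min t 1)"
    and infinite: "(\<integral>\<^sup>+ (y::'v::euclidean_space). ennreal (\<nu> (norm y)) \<partial>lborel) = \<infinity>"
    and K: "K > 0"
  shows "\<nu> K > 0"
proof (rule ccontr)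
  assume "\<not> \<nu> K > 0"
  then have K0: "\<nu> K = 0" using nonneg[OF K] by simp
  have zero: "\<nu> t = 0" if t: "t > 0" for t
  proof -
    obtain n :: nat where "K / min t 1 < real n" using reals_Archimedean2 by blast
    then have "t + real n * min t 1 \<ge> K" using t by (simp add: field_simps)
    then show ?thesis using nonincreasing_zero_propagates[OF nonneg mono step K K0 t] by blast
  qed
  have "(\<integral>\<^sup>+ (y::'v). ennreal (\<nu> (norm y)) \<partial>lborel) = (\<integral>\<^sup>+ (y::'v). 0 \<partial>lborel)"
    by (rule nn_integral_cong_AE) (use AE_lborel_singleton[of "0::'v"] zero in auto)
  then show False using infinite by simp
qed

lemma le_power_mult_shift:
  fixes \<nu> :: "real \<Rightarrow> real"
  assumes nonneg: "\<And>r. r > 0 \<Longrightarrow> \<nu> r \<ge> 0" and A: "A \<ge> 1"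
    and step: "\<And>r. r \<ge> 1 \<Longrightarrow> \<nu> r \<le> A * \<nu> (r + 1)"
  shows "s \<ge> 1 \<Longrightarrow> \<nu> s \<le> A ^ n * \<nu> (s + real n)"
proof (induction n arbitrary: s)
  case 0 then show ?case by simp
next
  case (Suc n)
  have "\<nu> s \<le> A * \<nu> (s + 1)" using step Suc.prems by blast
  also have "\<dots> \<le> A * (A ^ n * \<nu> (s + 1 + real n))"
    using Suc.IH[of "s + 1"] Suc.prems A by (intro mult_left_mono) auto
  finally show ?case by (simp add: algebra_simps)
qed

lemma min_one_le_shifted:
  fixes \<nu> :: "real \<Rightarrow> real"
  assumes pos: "\<And>r. r > 0 \<Longrightarrow> \<nu> r > 0"
    and mono: "\<And>r s. 0 < r \<Longrightarrow> r \<le> s \<Longrightarrow> \<nu> s \<le> \<nu> r"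
    and A: "A \<ge> 1" and step: "\<And>r. r \<ge> 1 \<Longrightarrow> \<nu> r \<le> A * \<nu> (r + 1)"
    and a: "a \<ge> 0"
  obtains C where "C \<ge> 1"
    and "\<And>r s. 0 < r \<Longrightarrow> r \<le> s + a \<Longrightarrow> min (\<nu> s) 1 \<le> C * min (\<nu> r) 1"
proof
  define n :: nat where "n = nat \<lceil>a\<rceil>"
  define c where "c = min (\<nu> (1 + a)) 1"
  define C where "C = max (A ^ n) (1 / c)"
  have c: "c > 0" unfolding c_def using pos[of "1 + a"] a by simp
  have An: "A ^ n \<ge> 1" using A by simp
  show C1: "C \<ge> 1" unfolding C_def using An by simp
  fix r s :: real
  assume r: "0 < r" and rs: "r \<le> s + a"
  have nonneg: "\<nu> t \<ge> 0" if "t > 0" for t using pos[OF that] by simp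
  have nr: "\<nu> r \<ge> 0" using nonneg[OF r] .
  consider "s \<ge> 1" | "s < 1" by linarith
  then show "min (\<nu> s) 1 \<le> C * min (\<nu> r) 1"
  proof cases
    case 1
    have "\<nu> s \<le> A ^ n * \<nu> (s + real n)"
      using le_power_mult_shift[where \<nu> = \<nu>, OF nonneg A step 1] .
    also have "\<dots> \<le> A ^ n * \<nu> r"
      using mono[OF r, of "s + real n"] rs An unfolding n_def by (intro mult_left_mono) linarith+
    finally have "min (\<nu> s) 1 \<le> A ^ n * min (\<nu> r) 1"
      using An by (auto simp: min_def)
    also have "\<dots> \<le> C * min (\<nu> r) 1" unfolding C_def using nr by (intro mult_right_mono) auto
    finally show ?thesis .
  next
    case 2
    have "c \<le> min (\<nu> r) 1" unfolding c_def using mono[OF r, of "1 + a"] rs 2 by simp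
    then have "1 \<le> (1 / c) * min (\<nu> r) 1" using c by (simp add: field_simps)
    also have "\<dots> \<le> C * min (\<nu> r) 1" unfolding C_def using nr by (intro mult_right_mono) auto
    finally show ?thesis by simp
  qed
qed

lemma borel_measurable_nonincreasing_pos:
  fixes \<nu> :: "real \<Rightarrow> real"
  assumes mono: "\<And>r s. 0 < r \<Longrightarrow> r \<le> s \<Longrightarrow> \<nu> s \<le> \<nu> r"
  shows "(\<lambda>r. if r > 0 then \<nu> r else 0) \<in> borel_measurable borel"
proof -
  have "(\<lambda>r. - (if r > 0 then \<nu> r else 0)) \<in> borel_measurable borel"
  proof (rule borel_measurable_piecewise_mono[of "{{0<..}, {..0}}"])
    fix c :: "real set" assume "c \<in> {{0<..}, {..0}}"
    then show "mono_on c (\<lambda>r. - (if r > 0 then \<nu> r else 0))"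
      by (auto simp: mono_on_def intro: mono)
  qed auto
  from borel_measurable_uminus[OF this] show ?thesis by simp
qed

lemma nn_integral_shifted_radial_finite:
  fixes \<nu> :: "real \<Rightarrow> real" and f :: "'v::euclidean_space \<Rightarrow> real"
  assumes pos: "\<And>r. r > 0 \<Longrightarrow> \<nu> r > 0"
    and mono: "\<And>r s. 0 < r \<Longrightarrow> r \<le> s \<Longrightarrow> \<nu> s \<le> \<nu> r"
    and A: "A \<ge> 1" and step: "\<And>r. r \<ge> 1 \<Longrightarrow> \<nu> r \<le> A * \<nu> (r + 1)"
    and f_meas: "f \<in> borel_measurable borel" and f_nonneg: "\<And>y. f y \<ge> 0"
    and f_int: "(\<integral>\<^sup>+ y. ennreal (f y * min (\<nu> (norm y)) 1) \<partial>lborel) < \<infinity>"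
  shows "(\<integral>\<^sup>+ y. ennreal (f y * min (\<nu> (norm (x - y))) 1) \<partial>lborel) < \<infinity>"
proof -
  obtain C where C1: "C \<ge> 1" and bound:
    "\<And>r s. 0 < r \<Longrightarrow> r \<le> s + norm x \<Longrightarrow> min (\<nu> s) 1 \<le> C * min (\<nu> r) 1"
    using min_one_le_shifted[where \<nu> = \<nu>, OF pos mono A step norm_ge_zero] by blast
  \<comment> \<open>\<open>\<nu>\<close> is only controlled on \<open>(0,\<infinity>)\<close>; \<open>g\<close> agrees with it off the null set \<open>{0}\<close> and is Borel.\<close>
  define g where "g = (\<lambda>r::real. if r > 0 then \<nu> r else 0)"
  have g_meas: "(\<lambda>y::'v. ennreal (f y * min (g (norm y)) 1)) \<in> borel_measurable lborel"
    using borel_measurable_nonincreasing_pos[OF mono] f_meas unfolding g_def by measurable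
  have "(\<integral>\<^sup>+ y. ennreal (f y * min (\<nu> (norm (x - y))) 1) \<partial>lborel)
      \<le> (\<integral>\<^sup>+ y. ennreal C * ennreal (f y * min (g (norm y)) 1) \<partial>lborel)"
  proof (rule nn_integral_mono_AE)
    show "AE y in lborel. ennreal (f y * min (\<nu> (norm (x - y))) 1)
            \<le> ennreal C * ennreal (f y * min (g (norm y)) 1)"
      using AE_lborel_singleton[of "0::'v"]
    proof eventually_elim
      case (elim y)
      have "norm y \<le> norm (x - y) + norm x"
        using norm_triangle_ineq4[of x "x - y"] by simp
      then have "f y * min (\<nu> (norm (x - y))) 1 \<le> f y * (C * min (g (norm y)) 1)"
        using bound[of "norm y" "norm (x - y)"] elim f_nonneg[of y]
        by (intro mult_left_mono) (auto simp: g_def)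
      then show ?case
        using C1 f_nonneg[of y] by (simp add: ennreal_mult'[symmetric] ennreal_leI mult.left_commute)
    qed
  qed
  also have "\<dots> = ennreal C * (\<integral>\<^sup>+ y. ennreal (f y * min (g (norm y)) 1) \<partial>lborel)"
    by (rule nn_integral_cmult[OF g_meas])
  also have "(\<integral>\<^sup>+ y. ennreal (f y * min (g (norm y)) 1) \<partial>lborel)
       = (\<integral>\<^sup>+ y. ennreal (f y * min (\<nu> (norm y)) 1) \<partial>lborel)"
    by (rule nn_integral_cong_AE, rule eventually_mono[OF AE_lborel_singleton[of "0::'v"]])
      (simp add: g_def)
  also have "ennreal C * \<dots> < \<infinity>" using f_int by (simp add: ennreal_mult_less_top)
  finally show ?thesis .
qed

theorem corollary5p3:
  fixes M :: "'a measure" and X :: "real \<Rightarrow> 'a \<Rightarrow> 'v::euclidean_space"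
    and \<nu> :: "real \<Rightarrow> real" and a1 a2 :: real and f :: "'v \<Rightarrow> real"
  assumes H0_process: "levy_process M X (levy_exponent \<nu>)"
    and H0_nonneg: "\<And>r. r > 0 \<Longrightarrow> \<nu> r \<ge> 0"
    and H0_levy: "(\<integral>\<^sup>+ (y::'v). ennreal (min 1 ((norm y)\<^sup>2) * \<nu> (norm y)) \<partial>lborel) < \<infinity>"
    and H0_infinite: "(\<integral>\<^sup>+ (y::'v). ennreal (\<nu> (norm y)) \<partial>lborel) = \<infinity>"
    and H1_mono: "\<And>r s. 0 < r \<Longrightarrow> r \<le> s \<Longrightarrow> \<nu> s \<le> \<nu> r"
    and H1_deriv: "\<exists>\<nu>'. (\<forall>r>0. set_integrable lborel {r..} \<nu>' \<and>
                          \<nu> r = - (LINT \<rho>:{r..}|lborel. \<nu>' \<rho>)) \<and>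
                       (\<forall>r s. 0 < r \<longrightarrow> r \<le> s \<longrightarrow> - \<nu>' s / s \<le> - \<nu>' r / r)"
    and H1_a: "\<And>r. r \<ge> 1 \<Longrightarrow> \<nu> r \<le> a1 * \<nu> (r + 1)"
    and H1_b: "\<And>r. 0 < r \<Longrightarrow> r \<le> 1 \<Longrightarrow> \<nu> r \<le> a1 * \<nu> (2 * r)"
    and H2: "\<And>x0 r h. 0 < r \<Longrightarrow> r \<le> 1 \<Longrightarrow> (\<forall>y. h y \<ge> 0) \<Longrightarrow>
               levy_harmonic M X h (ball x0 r) \<Longrightarrow>
               (\<forall>y\<in>ball x0 (r/2). \<forall>z\<in>ball x0 (r/2). h y \<le> a2 * h z)"
    and f_meas: "f \<in> borel_measurable borel"
    and f_nonneg: "\<And>y. f y \<ge> 0"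
    and f_int: "(\<integral>\<^sup>+ y. ennreal (f y * min (\<nu> (norm y)) 1) \<partial>lborel) < \<infinity>"
  shows "\<forall>x. (\<integral>\<^sup>+ y. ennreal (f y * min (\<nu> (norm (x - y))) 1) \<partial>lborel) < \<infinity>"
proof
  fix x :: 'v
  define A where "A = max a1 1"
  have A: "A \<ge> 1" unfolding A_def by simp
  have a1_le_A: "a1 * \<nu> r \<le> A * \<nu> r" if "r > 0" for r
    unfolding A_def using H0_nonneg[OF that] by (intro mult_right_mono) auto
  have step_far: "\<nu> r \<le> A * \<nu> (r + 1)" if "r \<ge> 1" for r
    using H1_a[OF that] a1_le_A[of "r + 1"] that by linarith
  have step: "\<nu> t \<le> A * \<nu> (t + min t 1)" if t: "t > 0" for t
  proof (cases "t \<le> 1")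
    case True
    then have "t + min t 1 = 2 * t" by simp
    then show ?thesis using H1_b[OF t True] a1_le_A[of "2 * t"] t by simp
  next
    case False
    then show ?thesis using step_far[of t] by simp
  qed
  have pos: "\<nu> r > 0" if "r > 0" for r
    using levy_density_pos[where \<nu> = \<nu>, OF H0_nonneg H1_mono step H0_infinite that] .
  show "(\<integral>\<^sup>+ y. ennreal (f y * min (\<nu> (norm (x - y))) 1) \<partial>lborel) < \<infinity>"
    using nn_integral_shifted_radial_finite[where \<nu> = \<nu>, OF pos H1_mono A step_far f_meas f_nonneg f_int] .
qed

end
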